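(* Let $1\le k\le s-1$, let $t=\binom{a_1}{b_1}\cdots\binom{a_k}{b_k}\in B(k\varpi_2)$, and let $1\le i\le k-1$ be such that both $b_i\le\bar a_i\le b_{i+1}$ and $a_i\le\bar b_{i+1}\le a_{i+1}$ hold. Then inserting $s-k$ columns $\binom{a_i}{\bar a_i}$ between columns $i$ and $i+1$ of $t$ gives the same tableau as inserting $s-k$ columns $\binom{\bar b_{i+1}}{b_{i+1}}$ between columns $i$ and $i+1$ of $t$.
   Context: Let $n\ge4$. Alphabet: $1<2<\dots<n-1<\{n,\bar n\}<\overline{n-1}<\dots<\bar2<\bar1$, a partial order in which $n$ and $\bar n$ are incomparable; set $\bar{\bar i}=i$ for unbarred $i$. A tableau of shape $(k,k)$ is a sequence of $k$ columns, column $j$ with top entry $a_j$ and bottom entry $b_j$, written $\binom{a_1}{b_1}\cdots\binom{a_k}{b_k}$ ($\binom{x}{y}$ denotes a column, not a binomial coefficient). $B(k\varpi_2)$ is the set of tableaux of shape $(k,k)$ such that: (C1) $a_j\le a_{j+1}$ and $b_j\le b_{j+1}$ for all $j$; (C2) $b_j\not\le a_j$; (C3) no $j$ and letter $x$ with $a_j=a_{j+1}=x$, $b_{j+1}=\bar x$, and no $j,x$ with $a_j=x$, $b_j=b_{j+1}=\bar x$; (C4) no $j<j'$ with columns $j,j'$ equal to $\binom{n-1}{n},\binom{n}{\overline{n-1}}$ respectively, nor to $\binom{n-1}{\bar n},\binom{\bar n}{\overline{n-1}}$; (C5) no column $\binom{1}{\bar1}$. *)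

theory Defs
  imports Main
begin

(* Letters of the type-D_n crystal alphabet: Ub i = i (unbarred), Br i = \bar i. *)
datatype letter = Ub nat | Br nat

definition valid_letter :: "nat \<Rightarrow> letter \<Rightarrow> bool" where
  "valid_letter n x = (case x of Ub i \<Rightarrow> 1 \<le> i \<and> i \<le> n | Br i \<Rightarrow> 1 \<le> i \<and> i \<le> n)"

fun bar :: "letter \<Rightarrow> letter" where
  "bar (Ub i) = Br i"
| "bar (Br i) = Ub i"

(* level in the chain 1<...<n-1<{n,\bar n}<\bar{n-1}<...<\bar 1; n and \bar n share level n *)
fun rank :: "nat \<Rightarrow> letter \<Rightarrow> nat" where
  "rank n (Ub i) = i"
| "rank n (Br i) = 2 * n - i"

(* the partial order: n and \bar n are incomparable *)
definition lleq :: "nat \<Rightarrow> letter \<Rightarrow> letter \<Rightarrow> bool" where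
  "lleq n x y = (x = y \<or> rank n x < rank n y)"

(* a column (a,b): top entry a, bottom entry b; a tableau of shape (k,k) is a list of k columns *)
type_synonym column = "letter \<times> letter"

definition Btab :: "nat \<Rightarrow> nat \<Rightarrow> column list set" where
  "Btab n k = {t. length t = k
     \<and> (\<forall>j<k. valid_letter n (fst (t!j)) \<and> valid_letter n (snd (t!j)))
     \<and> (\<forall>j. j + 1 < k \<longrightarrow> lleq n (fst (t!j)) (fst (t!(j+1))) \<and> lleq n (snd (t!j)) (snd (t!(j+1))))
     \<and> (\<forall>j<k. \<not> lleq n (snd (t!j)) (fst (t!j)))
     \<and> (\<forall>j x. j + 1 < k \<longrightarrow>
            \<not> (fst (t!j) = x \<and> fst (t!(j+1)) = x \<and> snd (t!(j+1)) = bar x)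
          \<and> \<not> (fst (t!j) = x \<and> snd (t!j) = bar x \<and> snd (t!(j+1)) = bar x))
     \<and> (\<forall>j j'. j < j' \<and> j' < k \<longrightarrow>
            \<not> (t!j = (Ub (n-1), Ub n) \<and> t!j' = (Ub n, Br (n-1)))
          \<and> \<not> (t!j = (Ub (n-1), Br n) \<and> t!j' = (Br n, Br (n-1))))
     \<and> (\<forall>j<k. t!j \<noteq> (Ub 1, Br 1))}"

(* insert m copies of column c between columns i and i+1 (1-based) *)
definition insert_cols :: "column list \<Rightarrow> nat \<Rightarrow> nat \<Rightarrow> column \<Rightarrow> column list" where
  "insert_cols t i m c = take i t @ replicate m c @ drop i t"

end

theory Submission
  imports Defs
begin

lemma bar_bar [simp]: "bar (bar x) = x"
  by (cases x) simp_all

(* bar reflects ranks about n, so if neither hypothesis held with equality,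
   rank a + rank b would lie both above and below 2n. *)
lemma lleq_bar_antisym:
  assumes "lleq n (bar a) b" and "lleq n a (bar b)"
  shows "a = bar b"
  using assms by (cases a; cases b) (auto simp: lleq_def)

theorem lemma4p9:
  fixes n k s i :: nat and t :: "column list"
  assumes "n \<ge> 4" and "1 \<le> k" and "k \<le> s - 1" and "t \<in> Btab n k"
    and "1 \<le> i" and "i \<le> k - 1"
    and "lleq n (snd (t!(i-1))) (bar (fst (t!(i-1))))"
    and "lleq n (bar (fst (t!(i-1)))) (snd (t!i))"
    and "lleq n (fst (t!(i-1))) (bar (snd (t!i)))"
    and "lleq n (bar (snd (t!i))) (fst (t!i))"
  shows "insert_cols t i (s - k) (fst (t!(i-1)), bar (fst (t!(i-1))))
       = insert_cols t i (s - k) (bar (snd (t!i)), snd (t!i))"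
proof -
  \<comment> \<open>Only the two inequalities relating a_i and b_(i+1) are needed: they force the inserted columns to coincide.\<close>
  have "fst (t!(i-1)) = bar (snd (t!i))"
    using lleq_bar_antisym assms(8,9) .
  then show ?thesis by simp
qed

end
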